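(* For any good configuration $F$, $\Pr(\mathcal P_S \text{ belongs to } F)=e^{-(\theta_F+o(1))k}$ as $k\to\infty$, where $\theta_F$ is a constant depending on $F$ (and not on $k$).
   Context: Fix $0<\varepsilon<\frac12$, a constant $M\ge 40$, and an integer $N$ divisible by $21$, sufficiently large in terms of $\varepsilon$ and $M$; let $k\to\infty$. Let $S=[-\frac12M\sqrt k,\frac12M\sqrt k]^2$, tiled by $(MN)^2$ small squares of side $\ell=\sqrt k/N$ (indexed in a fixed $k$-independent way), and let $\mathcal P_S$ be a Poisson process of intensity one in $S$. For a small square $S_i$ containing $r$ points, set $d(S_i)=0$ if $r=0$, $d(S_i)=\lceil N^3r/k\rceil/N$ if $1\le r\le k$, and $d(S_i)=\infty$ if $r>k$. A configuration $F$ is an assignment of a label in $\{0,\infty\}\cup\{j/N:1\le j\le N^3\}$ to each small square; a point set belongs to $F$ if its values $d(S_i)$ equal these labels. Let $\Sigma$ be the set of circles whose centres are centres of small squares and which pass through the centre of at least one other small square; for $\Gamma\in\Sigma$ let $R_\Gamma$ be the set of small squares lying entirely within distance $\frac52\ell\sqrt2$ of $\Gamma$. $F$ is of Type A if some label exceeds $N^2/21$; of Type B if for some $\Gamma\in\Sigma$, $\frac{k}{N^2}\sum_{S_i\in R_\Gamma}d(S_i)\ge\frac{\varepsilon k}{2}$. $F$ is good if it is of neither type. *)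

theory Defs
  imports "HOL-Probability.Probability"
begin

definition poisson_process_on ::
  "'a measure \<Rightarrow> ('a \<Rightarrow> (real \<times> real) set) \<Rightarrow> (real \<times> real) set \<Rightarrow> bool" where
  "poisson_process_on P Xs S \<longleftrightarrow>
     prob_space P \<and>
     (\<forall>\<omega>\<in>space P. finite (Xs \<omega>) \<and> Xs \<omega> \<subseteq> S) \<and>
     (\<forall>(m::nat) (A::nat \<Rightarrow> (real \<times> real) set) (c::nat \<Rightarrow> nat).
        (\<forall>i<m. A i \<in> sets (lborel :: (real \<times> real) measure) \<and> A i \<subseteq> S) \<and>
        (\<forall>i<m. \<forall>j<m. i \<noteq> j \<longrightarrow> A i \<inter> A j = {}) \<longrightarrow>
          {\<omega> \<in> space P. \<forall>i<m. card (Xs \<omega> \<inter> A i) = c i} \<in> sets P \<and>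
          measure P {\<omega> \<in> space P. \<forall>i<m. card (Xs \<omega> \<inter> A i) = c i} =
            (\<Prod>i<m. exp (- measure (lborel :: (real \<times> real) measure) (A i)) *
                      measure (lborel :: (real \<times> real) measure) (A i) ^ c i / fact (c i)))"

definition big_square :: "real \<Rightarrow> nat \<Rightarrow> (real \<times> real) set" where
  "big_square M k = {- M * sqrt k / 2 .. M * sqrt k / 2} \<times> {- M * sqrt k / 2 .. M * sqrt k / 2}"

text \<open>Number of small squares along one side: MN (assumed to be a natural number).\<close>
definition side_count :: "real \<Rightarrow> nat \<Rightarrow> nat" where
  "side_count M N = nat \<lfloor>M * real N\<rfloor>"

definition grid :: "real \<Rightarrow> nat \<Rightarrow> (nat \<times> nat) set" where
  "grid M N = {..<side_count M N} \<times> {..<side_count M N}"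

definition small_square :: "real \<Rightarrow> nat \<Rightarrow> nat \<Rightarrow> nat \<times> nat \<Rightarrow> (real \<times> real) set" where
  "small_square M N k p =
     (let l = sqrt k / N; x0 = - M * sqrt k / 2
      in {x0 + real (fst p) * l .. x0 + (real (fst p) + 1) * l} \<times>
         {x0 + real (snd p) * l .. x0 + (real (snd p) + 1) * l})"

definition d_val :: "nat \<Rightarrow> nat \<Rightarrow> nat \<Rightarrow> ereal" where
  "d_val N k r =
     (if r = 0 then 0
      else if r \<le> k then ereal (real_of_int \<lceil>real N ^ 3 * real r / real k\<rceil> / real N)
      else \<infinity>)"

definition valid_label :: "nat \<Rightarrow> ereal \<Rightarrow> bool" where
  "valid_label N x \<longleftrightarrow> x = 0 \<or> x = \<infinity> \<or> (\<exists>j\<in>{1..N ^ 3}. x = ereal (real j / real N))"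

definition config :: "real \<Rightarrow> nat \<Rightarrow> (nat \<times> nat \<Rightarrow> ereal) \<Rightarrow> bool" where
  "config M N F \<longleftrightarrow> (\<forall>p\<in>grid M N. valid_label N (F p))"

definition belongs :: "real \<Rightarrow> nat \<Rightarrow> nat \<Rightarrow> (real \<times> real) set \<Rightarrow> (nat \<times> nat \<Rightarrow> ereal) \<Rightarrow> bool" where
  "belongs M N k X F \<longleftrightarrow>
     (\<forall>p\<in>grid M N. d_val N k (card (X \<inter> small_square M N k p)) = F p)"

section \<open>Circles and annuli, in lattice units (small squares of side 1)\<close>

text \<open>Scaling the whole picture by the factor sqrt k / N (and translating) is a
  similarity, so the sets R_Gamma below do not depend on k.\<close>

definition centre :: "nat \<times> nat \<Rightarrow> real \<times> real" where
  "centre p = (real (fst p) + 1/2, real (snd p) + 1/2)"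

definition unit_square :: "nat \<times> nat \<Rightarrow> (real \<times> real) set" where
  "unit_square p = {real (fst p) .. real (fst p) + 1} \<times> {real (snd p) .. real (snd p) + 1}"

definition circles :: "real \<Rightarrow> nat \<Rightarrow> ((real \<times> real) \<times> real) set" where
  "circles M N = {(centre p, dist (centre p) (centre q)) | p q. p \<in> grid M N \<and> q \<in> grid M N \<and> p \<noteq> q}"

definition R_set :: "real \<Rightarrow> nat \<Rightarrow> (real \<times> real) \<times> real \<Rightarrow> (nat \<times> nat) set" where
  "R_set M N \<Gamma> = {q \<in> grid M N. \<forall>x\<in>unit_square q.
                      infdist x (sphere (fst \<Gamma>) (snd \<Gamma>)) \<le> 5/2 * sqrt 2}"

definition type_A :: "real \<Rightarrow> nat \<Rightarrow> (nat \<times> nat \<Rightarrow> ereal) \<Rightarrow> bool" where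
  "type_A M N F \<longleftrightarrow> (\<exists>p\<in>grid M N. F p > ereal (real N ^ 2 / 21))"

text \<open>(k/N^2) * sum \<ge> eps*k/2 is equivalent (k > 0) to sum \<ge> eps*N^2/2.\<close>
definition type_B :: "real \<Rightarrow> real \<Rightarrow> nat \<Rightarrow> (nat \<times> nat \<Rightarrow> ereal) \<Rightarrow> bool" where
  "type_B \<epsilon> M N F \<longleftrightarrow>
     (\<exists>\<Gamma>\<in>circles M N. (\<Sum>q\<in>R_set M N \<Gamma>. F q) \<ge> ereal (\<epsilon> * real N ^ 2 / 2))"

definition good :: "real \<Rightarrow> real \<Rightarrow> nat \<Rightarrow> (nat \<times> nat \<Rightarrow> ereal) \<Rightarrow> bool" where
  "good \<epsilon> M N F \<longleftrightarrow> config M N F \<and> \<not> type_A M N F \<and> \<not> type_B \<epsilon> M N F"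

end

theory Submission
  imports Defs "HOL-Real_Asymp.Real_Asymp"
begin

text \<open>Up to the null set of grid lines, a point set belongs to \<open>F\<close> iff the numbers of points in
  the open cells lie in prescribed sets. These counts are independent Poisson variables with mean
  \<open>\<lambda> = k/N\<^sup>2\<close>, the area of a cell. The label 0 has probability \<open>e\<^sup>-\<^sup>\<lambda>\<close>; a finite label
  \<open>j/N\<close> prescribes a count in the window \<open>((j-1)\<lambda>/N, j\<lambda>/N]\<close>, which never straddles the mean,
  and Stirling-type bounds on \<open>r!\<close> show that such a window has probability
  \<open>exp (-\<lambda> (I c + o(1)))\<close>, where \<open>I x = x ln x - x + 1\<close> and \<open>c\<close> is the endpoint nearest to 1.
  Multiplying over the finitely many cells gives \<open>\<theta>\<^sub>F\<close>. Goodness is only needed to exclude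
  the label \<open>\<infinity>\<close>.\<close>

section \<open>Poisson probabilities of windows\<close>

definition poisson_prob :: "real \<Rightarrow> nat \<Rightarrow> real" where
  "poisson_prob l r = exp (- l) * l ^ r / fact r"

definition poisson_rate :: "real \<Rightarrow> real" where
  "poisson_rate x = x * ln x - x + 1"

lemma poisson_prob_pos: "0 < l \<Longrightarrow> 0 < poisson_prob l r"
  by (simp add: poisson_prob_def)

lemma ln_poisson_prob: "0 < l \<Longrightarrow> ln (poisson_prob l r) = real r * ln l - l - ln (fact r)"
  by (simp add: poisson_prob_def ln_mult ln_div ln_realpow)

lemma poisson_rate_scaled:
  "0 < l \<Longrightarrow> l * poisson_rate (real r / l) = real r * ln (real r) - real r * ln l - real r + l"
  by (cases "r = 0") (simp_all add: poisson_rate_def ln_div field_simps)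

lemma ln_fact_ge: "real n * ln (real n) - real n \<le> ln (fact n)"
proof -
  have "real n ^ n / fact n \<le> exp (real n)"
    using sum_le_suminf[OF summable_exp_generic[of "real n"], of "{n}"]
    by (simp add: exp_def divide_inverse ac_simps)
  moreover have "0 < real n ^ n / fact n"
    by (cases n) simp_all
  ultimately have "ln (real n ^ n / fact n) \<le> real n"
    using ln_mono by fastforce
  moreover have "ln (real n ^ n / fact n) = real n * ln (real n) - ln (fact n)"
    by (subst ln_realpow[symmetric]) (simp add: ln_div)
  ultimately show ?thesis by simp
qed

lemma ln_fact_le: "1 \<le> n \<Longrightarrow> ln (fact n) \<le> real n * ln (real n) - real n + ln (real n) + 1"
proof (induction n rule: dec_induct)
  case base
  show ?case by simp
next
  case (step n)
  have "1 - real n / real (Suc n) \<le> ln (real (Suc n)) - ln (real n)"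
    using ln_le_minus_one[of "real n / real (Suc n)"] step.hyps by (simp add: ln_div)
  hence "1 \<le> (real n + 1) * ln (real n + 1) - (real n + 1) * ln (real n)"
    by (simp add: field_simps)
  moreover have "ln (fact (Suc n) :: real) = ln (real n + 1) + ln (fact n)"
    by (simp add: ln_mult)
  ultimately show ?case
    using step.IH by (simp add: algebra_simps)
qed

lemma ln_poisson_prob_le:
  assumes "0 < l" shows "ln (poisson_prob l r) \<le> - l * poisson_rate (real r / l)"
  using ln_poisson_prob[OF assms, of r] ln_fact_ge[of r] poisson_rate_scaled[OF assms, of r] by linarith

lemma ln_poisson_prob_ge:
  assumes "0 < l" "1 \<le> r"
  shows "- l * poisson_rate (real r / l) - 1 - ln (real r) \<le> ln (poisson_prob l r)"
  using ln_poisson_prob[OF assms(1), of r] ln_fact_le[OF assms(2)] poisson_rate_scaled[OF assms(1), of r]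
  by linarith

lemma poisson_rate_tangent: "0 < x \<Longrightarrow> 0 < y \<Longrightarrow> poisson_rate x + (y - x) * ln x \<le> poisson_rate y"
proof -
  assume "0 < x" "0 < y"
  hence "y * (1 - x / y) \<le> y * (ln y - ln x)"
    using ln_le_minus_one[of "x / y"] by (intro mult_left_mono) (simp_all add: ln_div)
  with \<open>0 < y\<close> show ?thesis by (simp add: poisson_rate_def algebra_simps)
qed

lemma poisson_rate_mono: "1 \<le> x \<Longrightarrow> x \<le> y \<Longrightarrow> poisson_rate x \<le> poisson_rate y"
  using poisson_rate_tangent[of x y] by (smt (verit) ln_ge_zero mult_nonneg_nonneg)

lemma poisson_rate_antimono: "0 < x \<Longrightarrow> x \<le> y \<Longrightarrow> y \<le> 1 \<Longrightarrow> poisson_rate y \<le> poisson_rate x"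
  using poisson_rate_tangent[of y x] by (smt (verit) ln_le_zero_iff mult_nonpos_nonpos)

definition poisson_window :: "real \<Rightarrow> real \<Rightarrow> real \<Rightarrow> nat set" where
  "poisson_window a b l = {r. a * l < real r \<and> real r \<le> b * l}"

text \<open>For an interval \<open>(a, b]\<close> on one side of 1, the endpoint nearest to 1 minimises
  \<open>poisson_rate\<close> over it.\<close>
definition interval_rate :: "real \<Rightarrow> real \<Rightarrow> real" where
  "interval_rate a b = poisson_rate (if b \<le> 1 then b else a)"

lemma finite_poisson_window: "finite (poisson_window a b l)"
  by (rule finite_subset[of _ "{..nat \<lfloor>b * l\<rfloor>}"]) (auto simp: poisson_window_def le_nat_floor)

lemma interval_rate_le:
  assumes "0 \<le> a" "b \<le> 1 \<or> 1 \<le> a" "a < x" "x \<le> b"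
  shows "interval_rate a b \<le> poisson_rate x"
  using assms poisson_rate_antimono[of x b] poisson_rate_mono[of a x]
  by (auto simp: interval_rate_def)

lemma poisson_window_point:
  assumes "0 \<le> a" "0 < l" "1 \<le> (b - a) * l" "c \<in> {a, b}"
  shows "\<exists>r\<in>poisson_window a b l. \<bar>real r - c * l\<bar> \<le> 1"
proof -
  have "0 \<le> a * l"
    using assms by simp
  moreover have "0 \<le> b * l"
    using calculation assms(3) by (simp add: algebra_simps)
  ultimately have floors: "real (nat \<lfloor>a * l\<rfloor>) = \<lfloor>a * l\<rfloor>" "real (nat \<lfloor>b * l\<rfloor>) = \<lfloor>b * l\<rfloor>"
    by simp_all
  show ?thesis
  proof (cases "c = a")
    case True
    have "a * l < real (nat \<lfloor>a * l\<rfloor> + 1)" "real (nat \<lfloor>a * l\<rfloor> + 1) \<le> a * l + 1"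
      using floors by linarith+
    with True assms(3) show ?thesis
      by (intro bexI[of _ "nat \<lfloor>a * l\<rfloor> + 1"]) (auto simp: poisson_window_def algebra_simps)
  next
    case False
    have "b * l - 1 < real (nat \<lfloor>b * l\<rfloor>)" "real (nat \<lfloor>b * l\<rfloor>) \<le> b * l"
      using floors by linarith+
    with False assms(3,4) show ?thesis
      by (intro bexI[of _ "nat \<lfloor>b * l\<rfloor>"]) (auto simp: poisson_window_def algebra_simps)
  qed
qed

definition poisson_window_prob :: "real \<Rightarrow> real \<Rightarrow> real \<Rightarrow> real" where
  "poisson_window_prob a b l = (\<Sum>r\<in>poisson_window a b l. poisson_prob l r)"

lemma poisson_window_prob_le:
  assumes "0 \<le> a" "a < b" "b \<le> 1 \<or> 1 \<le> a" "0 < l"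
  shows "poisson_window_prob a b l \<le> b * l * exp (- l * interval_rate a b)"
proof -
  have term_le: "poisson_prob l r \<le> exp (- l * interval_rate a b)" if "r \<in> poisson_window a b l" for r
  proof -
    have "a < real r / l" "real r / l \<le> b"
      using that \<open>0 < l\<close> by (auto simp: poisson_window_def field_simps)
    hence "l * interval_rate a b \<le> l * poisson_rate (real r / l)"
      using assms interval_rate_le by (intro mult_left_mono) auto
    hence "ln (poisson_prob l r) \<le> - l * interval_rate a b"
      using ln_poisson_prob_le[OF \<open>0 < l\<close>, of r] by simp
    thus ?thesis
      using poisson_prob_pos[OF \<open>0 < l\<close>] by (metis exp_le_cancel_iff exp_ln)
  qed
  have "0 \<le> a * l" "0 \<le> b * l"
    using assms by simp_all
  hence "card (poisson_window a b l) \<le> card {1..nat \<lfloor>b * l\<rfloor>}"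
    by (intro card_mono) (auto simp: poisson_window_def le_nat_floor intro: order.strict_trans1)
  hence "real (card (poisson_window a b l)) \<le> real (nat \<lfloor>b * l\<rfloor>)"
    by simp
  also have "\<dots> \<le> b * l"
    using \<open>0 \<le> b * l\<close> by simp
  finally have card_le: "real (card (poisson_window a b l)) \<le> b * l" .
  have "poisson_window_prob a b l \<le> card (poisson_window a b l) * exp (- l * interval_rate a b)"
    unfolding poisson_window_prob_def using term_le by (rule sum_bounded_above)
  also have "\<dots> \<le> b * l * exp (- l * interval_rate a b)"
    using card_le by (intro mult_right_mono) auto
  finally show ?thesis .
qed

lemma poisson_window_prob_ge:
  assumes "0 \<le> a" "0 < l" "r \<in> poisson_window a b l"
  shows "0 < poisson_window_prob a b l"
    and "- l * poisson_rate (real r / l) - 1 - ln (real r) \<le> ln (poisson_window_prob a b l)"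
proof -
  have "0 \<le> a * l"
    using assms by simp
  hence "1 \<le> r"
    using assms(3) by (auto simp: poisson_window_def)
  have term_le: "poisson_prob l r \<le> poisson_window_prob a b l"
    unfolding poisson_window_prob_def using assms finite_poisson_window poisson_prob_pos
    by (intro member_le_sum) (auto intro: less_imp_le)
  thus "0 < poisson_window_prob a b l"
    using poisson_prob_pos[OF assms(2), of r] by linarith
  show "- l * poisson_rate (real r / l) - 1 - ln (real r) \<le> ln (poisson_window_prob a b l)"
    using ln_poisson_prob_ge[OF assms(2) \<open>1 \<le> r\<close>] ln_mono[OF term_le poisson_prob_pos[OF assms(2)]]
    by linarith
qed

lemma poisson_window_near:
  assumes "0 \<le> a" "a < b" "c \<in> {a, b}"
  obtains r where "\<forall>\<^sub>F l in at_top. 1 \<le> l \<and> r l \<in> poisson_window a b l \<and> \<bar>real (r l) - c * l\<bar> \<le> 1"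
    and "((\<lambda>l. real (r l) / l) \<longlongrightarrow> c) at_top"
proof
  define r where "r l = (SOME r. r \<in> poisson_window a b l \<and> \<bar>real r - c * l\<bar> \<le> 1)" for l
  have "\<forall>\<^sub>F l in at_top. 1 \<le> l \<and> 1 \<le> (b - a) * l"
    using assms(2) by (intro eventually_conj) real_asymp+
  thus r: "\<forall>\<^sub>F l in at_top. 1 \<le> l \<and> r l \<in> poisson_window a b l \<and> \<bar>real (r l) - c * l\<bar> \<le> 1"
  proof eventually_elim
    case (elim l)
    then obtain r0 where r0: "r0 \<in> poisson_window a b l" "\<bar>real r0 - c * l\<bar> \<le> 1"
      using poisson_window_point[OF assms(1) _ _ assms(3), of l] by auto
    have "r l \<in> poisson_window a b l \<and> \<bar>real (r l) - c * l\<bar> \<le> 1"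
      unfolding r_def by (rule someI[of _ r0]) (use r0 in simp)
    with elim show ?case by simp
  qed
  show "((\<lambda>l. real (r l) / l) \<longlongrightarrow> c) at_top"
  proof (rule tendsto_sandwich[of "\<lambda>l. c - 1 / l" _ _ "\<lambda>l. c + 1 / l"])
    show "\<forall>\<^sub>F l in at_top. c - 1 / l \<le> real (r l) / l"
      using r
    proof eventually_elim
      case (elim l)
      hence "(c * l - 1) / l \<le> real (r l) / l"
        by (intro divide_right_mono) auto
      thus ?case using elim by (simp add: diff_divide_distrib)
    qed
    show "\<forall>\<^sub>F l in at_top. real (r l) / l \<le> c + 1 / l"
      using r
    proof eventually_elim
      case (elim l)
      hence "real (r l) / l \<le> (c * l + 1) / l"
        by (intro divide_right_mono) auto
      thus ?case using elim by (simp add: add_divide_distrib)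
    qed
  qed real_asymp+
qed

lemma poisson_window_prob_lower:
  assumes "0 \<le> a" "a < b" "c \<in> {a, b}" "0 < c"
  obtains L where "\<forall>\<^sub>F l in at_top. 0 < poisson_window_prob a b l \<and> L l \<le> ln (poisson_window_prob a b l) / l"
    and "(L \<longlongrightarrow> - poisson_rate c) at_top"
proof -
  obtain r where r: "\<forall>\<^sub>F l in at_top. 1 \<le> l \<and> r l \<in> poisson_window a b l \<and> \<bar>real (r l) - c * l\<bar> \<le> 1"
    and r_lim: "((\<lambda>l. real (r l) / l) \<longlongrightarrow> c) at_top"
    using poisson_window_near[OF assms(1-3)] by blast
  define L where "L l = - poisson_rate (real (r l) / l) - (1 + ln ((c + 1) * l)) / l" for l
  have "\<forall>\<^sub>F l in at_top. 0 < poisson_window_prob a b l \<and> L l \<le> ln (poisson_window_prob a b l) / l"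
    using r
  proof eventually_elim
    case (elim l)
    hence "0 \<le> a * l" "0 < l" "r l \<in> poisson_window a b l"
      using assms(1) by simp_all
    note window = poisson_window_prob_ge[OF assms(1) this(2,3)]
    have "ln (real (r l)) \<le> ln ((c + 1) * l)"
      using elim \<open>0 \<le> a * l\<close> assms(4) by (intro ln_mono) (auto simp: poisson_window_def algebra_simps)
    hence "(- l * poisson_rate (real (r l) / l) - 1 - ln ((c + 1) * l)) / l \<le> ln (poisson_window_prob a b l) / l"
      using window(2) \<open>0 < l\<close> by (intro divide_right_mono) auto
    moreover have "(- l * poisson_rate (real (r l) / l) - 1 - ln ((c + 1) * l)) / l = L l"
      using \<open>0 < l\<close> by (simp add: L_def field_simps)
    ultimately show ?case
      using window(1) by simp
  qed
  moreover have "(L \<longlongrightarrow> - poisson_rate c) at_top"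
  proof -
    have "((\<lambda>l. poisson_rate (real (r l) / l)) \<longlongrightarrow> poisson_rate c) at_top"
      unfolding poisson_rate_def using assms(4) by (intro tendsto_intros r_lim) auto
    moreover have "((\<lambda>l. (1 + ln ((c + 1) * l)) / l) \<longlongrightarrow> 0) at_top"
      using assms(4) by real_asymp
    ultimately have "(L \<longlongrightarrow> - poisson_rate c - 0) at_top"
      unfolding L_def by (intro tendsto_diff tendsto_minus)
    thus ?thesis
      by simp
  qed
  ultimately show ?thesis
    by (rule that)
qed

lemma poisson_window_rate:
  assumes "0 \<le> a" "a < b" "b \<le> 1 \<or> 1 \<le> a"
  shows "\<forall>\<^sub>F l in at_top. 0 < poisson_window_prob a b l"
    and "((\<lambda>l. ln (poisson_window_prob a b l) / l) \<longlongrightarrow> - interval_rate a b) at_top"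
proof -
  define c where "c = (if b \<le> 1 then b else a)"
  have c: "c \<in> {a, b}" "0 < c" "interval_rate a b = poisson_rate c"
    using assms by (auto simp: c_def interval_rate_def)
  obtain L where lower: "\<forall>\<^sub>F l in at_top. 0 < poisson_window_prob a b l \<and> L l \<le> ln (poisson_window_prob a b l) / l"
    and L: "(L \<longlongrightarrow> - interval_rate a b) at_top"
    unfolding c(3) by (rule poisson_window_prob_lower[OF assms(1,2) c(1,2)])
  show pos: "\<forall>\<^sub>F l in at_top. 0 < poisson_window_prob a b l"
    using lower by (rule eventually_mono) simp
  have upper: "\<forall>\<^sub>F l in at_top. ln (poisson_window_prob a b l) / l \<le> ln (b * l) / l - interval_rate a b"
    using pos eventually_gt_at_top[of 0]
  proof eventually_elim
    case (elim l)
    have "0 < b * l"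
      using assms elim by simp
    with elim have "ln (poisson_window_prob a b l) \<le> ln (b * l * exp (- l * interval_rate a b))"
      using poisson_window_prob_le[OF assms, of l] by (intro ln_mono) auto
    also have "\<dots> = ln (b * l) - l * interval_rate a b"
      using \<open>0 < b * l\<close> by (simp add: ln_mult_pos)
    finally have "ln (poisson_window_prob a b l) / l \<le> (ln (b * l) - l * interval_rate a b) / l"
      using elim by (intro divide_right_mono) auto
    also have "\<dots> = ln (b * l) / l - interval_rate a b"
      using elim by (simp add: diff_divide_distrib)
    finally show ?case .
  qed
  have "((\<lambda>l. ln (b * l) / l) \<longlongrightarrow> 0) at_top"
    using assms(1,2) by real_asymp
  from tendsto_diff[OF this tendsto_const]
  have upper_lim: "((\<lambda>l. ln (b * l) / l - interval_rate a b) \<longlongrightarrow> - interval_rate a b) at_top"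
    by simp
  have "\<forall>\<^sub>F l in at_top. L l \<le> ln (poisson_window_prob a b l) / l"
    using lower by (rule eventually_mono) simp
  from tendsto_sandwich[OF this upper L upper_lim]
  show "((\<lambda>l. ln (poisson_window_prob a b l) / l) \<longlongrightarrow> - interval_rate a b) at_top" .
qed

section \<open>Exponential decay rates\<close>

definition decays_at_rate :: "(nat \<Rightarrow> real) \<Rightarrow> real \<Rightarrow> bool" where
  "decays_at_rate q \<theta> \<longleftrightarrow>
     (\<forall>\<^sub>F k in sequentially. 0 < q k) \<and> ((\<lambda>k. ln (q k) / real k) \<longlongrightarrow> - \<theta>) sequentially"

lemma decays_at_rate_exp: "decays_at_rate (\<lambda>k. exp (- c * real k)) c"
proof -
  have "\<forall>\<^sub>F k in sequentially. ln (exp (- c * real k)) / real k = - c"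
    using eventually_gt_at_top[of 0] by eventually_elim simp
  thus ?thesis
    unfolding decays_at_rate_def by (simp add: tendsto_eventually)
qed

lemma decays_at_rate_cong:
  assumes "\<forall>\<^sub>F k in sequentially. q k = q' k" "decays_at_rate q \<theta>"
  shows "decays_at_rate q' \<theta>"
  using assms unfolding decays_at_rate_def
  by (auto elim: eventually_elim2 intro: Lim_transform_eventually simp: eventually_mono)

lemma decays_at_rate_prod:
  assumes "finite G" "\<And>p. p \<in> G \<Longrightarrow> decays_at_rate (q p) (\<theta> p)"
  shows "decays_at_rate (\<lambda>k. \<Prod>p\<in>G. q p k) (\<Sum>p\<in>G. \<theta> p)"
proof -
  have pos: "\<forall>\<^sub>F k in sequentially. \<forall>p\<in>G. 0 < q p k"
    using assms by (simp add: eventually_ball_finite decays_at_rate_def)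
  hence "\<forall>\<^sub>F k in sequentially. (\<Sum>p\<in>G. ln (q p k) / real k) = ln (\<Prod>p\<in>G. q p k) / real k"
    by eventually_elim (subst ln_prod, auto simp: assms(1) sum_divide_distrib)
  moreover have "((\<lambda>k. \<Sum>p\<in>G. ln (q p k) / real k) \<longlongrightarrow> (\<Sum>p\<in>G. - \<theta> p)) sequentially"
    using assms(2) by (intro tendsto_sum) (simp add: decays_at_rate_def)
  ultimately have "((\<lambda>k. ln (\<Prod>p\<in>G. q p k) / real k) \<longlongrightarrow> - (\<Sum>p\<in>G. \<theta> p)) sequentially"
    by (auto simp: sum_negf intro: Lim_transform_eventually)
  moreover have "\<forall>\<^sub>F k in sequentially. 0 < (\<Prod>p\<in>G. q p k)"
    using pos by eventually_elim (simp add: prod_pos)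
  ultimately show ?thesis
    by (simp add: decays_at_rate_def)
qed

lemma decays_at_rate_imp_exp:
  assumes "decays_at_rate q \<theta>"
  shows "\<exists>e. e \<longlonglongrightarrow> 0 \<and> (\<forall>\<^sub>F k in sequentially. q k = exp (- (\<theta> + e k) * real k))"
proof (intro exI conjI)
  have "(\<lambda>k. - (ln (q k) / real k) - \<theta>) \<longlonglongrightarrow> - (- \<theta>) - \<theta>"
    using assms unfolding decays_at_rate_def by (intro tendsto_intros) auto
  thus "(\<lambda>k. - ln (q k) / real k - \<theta>) \<longlonglongrightarrow> 0"
    by simp
  show "\<forall>\<^sub>F k in sequentially. q k = exp (- (\<theta> + (- ln (q k) / real k - \<theta>)) * real k)"
    using eventually_conj[OF assms[unfolded decays_at_rate_def, THEN conjunct1] eventually_gt_at_top[of 0]]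
    by eventually_elim simp
qed

lemma poisson_window_decays:
  assumes "0 \<le> a" "a < b" "b \<le> 1 \<or> 1 \<le> a" "0 < c"
  shows "decays_at_rate (\<lambda>k. poisson_window_prob a b (real k / c)) (interval_rate a b / c)"
proof -
  have scale: "filterlim (\<lambda>k. real k / c) at_top sequentially"
    using assms(4) by real_asymp
  have "((\<lambda>k. ln (poisson_window_prob a b (real k / c)) / (real k / c) * (1 / c))
          \<longlongrightarrow> - interval_rate a b * (1 / c)) sequentially"
    using filterlim_compose[OF poisson_window_rate(2)[OF assms(1-3)] scale]
    by (intro tendsto_mult tendsto_const)
  moreover have "\<forall>\<^sub>F k in sequentially. ln (poisson_window_prob a b (real k / c)) / (real k / c) * (1 / c)
                   = ln (poisson_window_prob a b (real k / c)) / real k"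
    using eventually_gt_at_top[of 0] by eventually_elim (use assms(4) in simp)
  moreover have "\<forall>\<^sub>F k in sequentially. 0 < poisson_window_prob a b (real k / c)"
    using filterlim_iff[THEN iffD1, OF scale, rule_format, OF poisson_window_rate(1)[OF assms(1-3)]] .
  ultimately show ?thesis
    unfolding decays_at_rate_def by (auto intro: Lim_transform_eventually)
qed

definition label_counts :: "nat \<Rightarrow> nat \<Rightarrow> ereal \<Rightarrow> nat set" where
  "label_counts N k v = {r. d_val N k r = v}"

definition label_prob :: "nat \<Rightarrow> nat \<Rightarrow> ereal \<Rightarrow> real" where
  "label_prob N k v = (\<Sum>r\<in>label_counts N k v. poisson_prob (real k / real N ^ 2) r)"

lemma finite_label_counts: "v \<noteq> \<infinity> \<Longrightarrow> finite (label_counts N k v)"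
  by (rule finite_subset[of _ "{..k}"]) (auto simp: label_counts_def d_val_def)

lemma label_counts_zero:
  assumes "0 < N" shows "label_counts N k 0 = {0}"
proof -
  have "d_val N k r \<noteq> 0" if "0 < r" "r \<le> k" for r
  proof -
    have "0 < real N ^ 3 * real r / real k"
      using assms that by simp
    hence "\<lceil>real N ^ 3 * real r / real k\<rceil> \<noteq> 0"
      by (metis ceiling_le_zero not_le order.refl)
    thus ?thesis
      using that assms by (simp add: d_val_def)
  qed
  thus ?thesis
    by (force simp: label_counts_def d_val_def)
qed

lemma d_val_eq_frac_iff:
  assumes "0 < N" "0 < k" "1 \<le> j" "j \<le> N ^ 3"
  shows "d_val N k r = ereal (real j / real N) \<longleftrightarrow>
           (real j - 1) * real k / real N ^ 3 < real r \<and> real r \<le> real j * real k / real N ^ 3"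
proof (cases "r = 0 \<or> k < r")
  case True
  have "real j \<le> real N ^ 3"
    using assms(4) by (metis of_nat_le_iff of_nat_power)
  hence "real j * real k \<le> real N ^ 3 * real k"
    by (intro mult_right_mono) auto
  hence "real j * real k / real N ^ 3 \<le> real k"
    using assms(1) by (simp add: divide_le_eq mult.commute)
  moreover have "0 \<le> (real j - 1) * real k / real N ^ 3"
    using assms(3) by simp
  ultimately have "\<not> ((real j - 1) * real k / real N ^ 3 < real r \<and> real r \<le> real j * real k / real N ^ 3)"
    using True by auto
  moreover have "d_val N k r \<noteq> ereal (real j / real N)"
    using True assms by (auto simp: d_val_def zero_ereal_def)
  ultimately show ?thesis
    by blast
next
  case False
  hence "d_val N k r = ereal (real j / real N) \<longleftrightarrow> \<lceil>real N ^ 3 * real r / real k\<rceil> = int j"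
    using assms(1) by (auto simp: d_val_def field_simps)
  also have "\<dots> \<longleftrightarrow> real j - 1 < real N ^ 3 * real r / real k \<and> real N ^ 3 * real r / real k \<le> real j"
    by (simp add: ceiling_eq_iff)
  also have "\<dots> \<longleftrightarrow> (real j - 1) * real k / real N ^ 3 < real r \<and> real r \<le> real j * real k / real N ^ 3"
    using assms(1,2) by (simp add: field_simps)
  finally show ?thesis .
qed

lemma label_counts_frac:
  assumes "0 < N" "0 < k" "1 \<le> j" "j \<le> N ^ 3"
  shows "label_counts N k (ereal (real j / real N))
           = poisson_window ((real j - 1) / real N) (real j / real N) (real k / real N ^ 2)"
proof -
  have "real N * real N ^ 2 = real N ^ 3"
    by (simp add: power2_eq_square power3_eq_cube)
  thus ?thesis
    by (simp add: label_counts_def poisson_window_def d_val_eq_frac_iff[OF assms])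
qed

lemma label_prob_decays:
  assumes "0 < N" "valid_label N v" "v \<noteq> \<infinity>"
  shows "\<exists>\<theta>. decays_at_rate (\<lambda>k. label_prob N k v) \<theta>"
proof -
  consider "v = 0" | j where "j \<in> {1..N ^ 3}" "v = ereal (real j / real N)"
    using assms(2,3) unfolding valid_label_def by blast
  thus ?thesis
  proof cases
    case 1
    hence "label_prob N k v = exp (- (1 / real N ^ 2) * real k)" for k
      using label_counts_zero[OF assms(1)] by (simp add: label_prob_def poisson_prob_def)
    thus ?thesis
      using decays_at_rate_exp[of "1 / real N ^ 2"] by auto
  next
    case (2 j)
    note j = 2(1) and v = 2(2)
    define a b where "a = (real j - 1) / real N" and "b = real j / real N"
    have "0 \<le> a" "a < b"
      using j assms(1) by (simp_all add: a_def b_def divide_strict_right_mono)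
    moreover have "b \<le> 1 \<or> 1 \<le> a"
      \<comment> \<open>\<open>1 = N/N\<close> is itself an endpoint, so the window lies on one side of the mean\<close>
      using assms(1) by (cases "j \<le> N") (auto simp: a_def b_def)
    ultimately have window: "decays_at_rate
        (\<lambda>k. poisson_window_prob a b (real k / real N ^ 2)) (interval_rate a b / real N ^ 2)"
      using assms(1) by (intro poisson_window_decays) auto
    have "\<forall>\<^sub>F k in sequentially. poisson_window_prob a b (real k / real N ^ 2) = label_prob N k v"
      using eventually_gt_at_top[of 0]
      by eventually_elim
        (use assms(1) j in \<open>simp add: label_prob_def poisson_window_prob_def v label_counts_frac a_def b_def\<close>)
    from decays_at_rate_cong[OF this window] show ?thesis ..
  qed
qed

section \<open>Poisson point processes\<close>

lemma poisson_process_counts: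
  fixes A :: "'b \<Rightarrow> (real \<times> real) set"
  assumes pp: "poisson_process_on P Xs S" and "finite G"
    and A: "\<And>p. p \<in> G \<Longrightarrow> A p \<in> sets lborel \<and> A p \<subseteq> S" and disj: "disjoint_family_on A G"
  shows "{\<omega> \<in> space P. \<forall>p\<in>G. card (Xs \<omega> \<inter> A p) = c p} \<in> sets P"
    and "measure P {\<omega> \<in> space P. \<forall>p\<in>G. card (Xs \<omega> \<inter> A p) = c p}
           = (\<Prod>p\<in>G. poisson_prob (measure lborel (A p)) (c p))"
proof -
  obtain h where h: "bij_betw h {..<card G} G"
    using ex_bij_betw_nat_finite[OF \<open>finite G\<close>] by (auto simp: lessThan_atLeast0)
  have ball: "(\<forall>i<card G. Q (h i)) \<longleftrightarrow> (\<forall>p\<in>G. Q p)" for Q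
    using h unfolding bij_betw_def by (metis imageE image_eqI lessThan_iff)
  have "\<forall>i<card G. A (h i) \<in> sets lborel \<and> A (h i) \<subseteq> S"
    using A h unfolding bij_betw_def by auto
  moreover have "\<forall>i<card G. \<forall>j<card G. i \<noteq> j \<longrightarrow> A (h i) \<inter> A (h j) = {}"
  proof (intro allI impI)
    fix i j assume "i < card G" "j < card G" "i \<noteq> j"
    with h have "h i \<in> G" "h j \<in> G" "h i \<noteq> h j"
      by (auto simp: bij_betw_def inj_on_def)
    with disj show "A (h i) \<inter> A (h j) = {}"
      by (simp add: disjoint_family_on_def)
  qed
  ultimately have law: "{\<omega> \<in> space P. \<forall>i<card G. card (Xs \<omega> \<inter> A (h i)) = c (h i)} \<in> sets P \<and>
      measure P {\<omega> \<in> space P. \<forall>i<card G. card (Xs \<omega> \<inter> A (h i)) = c (h i)}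
        = (\<Prod>i<card G. poisson_prob (measure lborel (A (h i))) (c (h i)))"
    using pp[unfolded poisson_process_on_def, THEN conjunct2, THEN conjunct2, rule_format,
             of "card G" "\<lambda>i. A (h i)" "\<lambda>i. c (h i)"]
    unfolding poisson_prob_def by blast
  have event: "{\<omega> \<in> space P. \<forall>i<card G. card (Xs \<omega> \<inter> A (h i)) = c (h i)}
      = {\<omega> \<in> space P. \<forall>p\<in>G. card (Xs \<omega> \<inter> A p) = c p}"
    by (intro Collect_cong conj_cong refl ball)
  have "(\<Prod>i<card G. poisson_prob (measure lborel (A (h i))) (c (h i)))
          = (\<Prod>p\<in>G. poisson_prob (measure lborel (A p)) (c p))"
    using prod.reindex_bij_betw[OF h] by simp
  with law show "{\<omega> \<in> space P. \<forall>p\<in>G. card (Xs \<omega> \<inter> A p) = c p} \<in> sets P"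
    and "measure P {\<omega> \<in> space P. \<forall>p\<in>G. card (Xs \<omega> \<inter> A p) = c p}
           = (\<Prod>p\<in>G. poisson_prob (measure lborel (A p)) (c p))"
    unfolding event by simp_all
qed

lemma poisson_process_count_event:
  assumes "poisson_process_on P Xs S" "A \<in> sets lborel" "A \<subseteq> S" "finite D"
  shows "{\<omega> \<in> space P. card (Xs \<omega> \<inter> A) \<in> D} \<in> sets P"
proof -
  have "{\<omega> \<in> space P. card (Xs \<omega> \<inter> A) = r} \<in> sets P" for r
    using poisson_process_counts(1)[OF assms(1), of "{()}" "\<lambda>_. A" "\<lambda>_. r"] assms(2,3)
    by (simp add: disjoint_family_on_def)
  moreover have "{\<omega> \<in> space P. card (Xs \<omega> \<inter> A) \<in> D} = (\<Union>r\<in>D. {\<omega> \<in> space P. card (Xs \<omega> \<inter> A) = r})"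
    by auto
  ultimately show ?thesis
    using assms(4) by (simp add: sets.finite_UN)
qed

lemma poisson_process_AE_disjoint:
  assumes pp: "poisson_process_on P Xs S" and A: "A \<in> sets lborel" "A \<subseteq> S" "measure lborel A = 0"
  shows "AE \<omega> in P. Xs \<omega> \<inter> A = {}"
proof -
  interpret prob_space P
    using pp unfolding poisson_process_on_def by (elim conjE)
  have "prob {\<omega> \<in> space P. card (Xs \<omega> \<inter> A) = 0} = 1"
    using poisson_process_counts(2)[OF pp, of "{()}" "\<lambda>_. A" "\<lambda>_. 0"] A
    by (simp add: disjoint_family_on_def poisson_prob_def)
  hence "AE \<omega> in P. \<omega> \<in> {\<omega> \<in> space P. card (Xs \<omega> \<inter> A) = 0}"
    by (rule AE_prob_1)
  moreover have "\<forall>\<omega>\<in>space P. finite (Xs \<omega>)"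
    using pp unfolding poisson_process_on_def by blast
  ultimately show ?thesis
    by (auto elim: AE_mp)
qed

lemma poisson_process_counts_in:
  fixes A :: "'b \<Rightarrow> (real \<times> real) set"
  assumes pp: "poisson_process_on P Xs S" and "finite G"
    and A: "\<And>p. p \<in> G \<Longrightarrow> A p \<in> sets lborel \<and> A p \<subseteq> S" and disj: "disjoint_family_on A G"
    and D: "\<And>p. p \<in> G \<Longrightarrow> finite (D p)"
  shows "measure P {\<omega> \<in> space P. \<forall>p\<in>G. card (Xs \<omega> \<inter> A p) \<in> D p}
           = (\<Prod>p\<in>G. \<Sum>r\<in>D p. poisson_prob (measure lborel (A p)) r)"
proof -
  interpret prob_space P
    using pp unfolding poisson_process_on_def by (elim conjE)
  define E where "E c = {\<omega> \<in> space P. \<forall>p\<in>G. card (Xs \<omega> \<inter> A p) = c p}" for c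
  note E = poisson_process_counts[OF pp \<open>finite G\<close> A disj, folded E_def]
  have union: "{\<omega> \<in> space P. \<forall>p\<in>G. card (Xs \<omega> \<inter> A p) \<in> D p} = (\<Union>c\<in>PiE G D. E c)"
  proof (intro equalityI subsetI)
    fix \<omega> assume "\<omega> \<in> {\<omega> \<in> space P. \<forall>p\<in>G. card (Xs \<omega> \<inter> A p) \<in> D p}"
    thus "\<omega> \<in> (\<Union>c\<in>PiE G D. E c)"
      by (intro UN_I[of "restrict (\<lambda>p. card (Xs \<omega> \<inter> A p)) G"]) (auto simp: E_def)
  qed (auto simp: E_def PiE_def Pi_def)
  have "disjoint_family_on E (PiE G D)"
    unfolding disjoint_family_on_def
  proof (intro ballI impI)
    fix c c' assume c: "c \<in> PiE G D" "c' \<in> PiE G D" "c \<noteq> c'"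
    then obtain p where "p \<in> G" "c p \<noteq> c' p"
      using PiE_ext[OF c(1,2)] by blast
    thus "E c \<inter> E c' = {}"
      unfolding E_def by auto
  qed
  hence "prob {\<omega> \<in> space P. \<forall>p\<in>G. card (Xs \<omega> \<inter> A p) \<in> D p} = (\<Sum>c\<in>PiE G D. prob (E c))"
    unfolding union using E(1) \<open>finite G\<close> D
    by (intro finite_measure_finite_Union finite_PiE) auto
  also have "\<dots> = (\<Sum>c\<in>PiE G D. \<Prod>p\<in>G. poisson_prob (measure lborel (A p)) (c p))"
    using E(2) by simp
  also have "\<dots> = (\<Prod>p\<in>G. \<Sum>r\<in>D p. poisson_prob (measure lborel (A p)) r)"
    using \<open>finite G\<close> D by (rule prod_sum_PiE[symmetric])
  finally show ?thesis .
qed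

section \<open>The grid\<close>

lemma emeasure_lborel_Times:
  fixes A B :: "real set"
  assumes "A \<in> sets borel" "B \<in> sets borel"
  shows "emeasure lborel (A \<times> B) = emeasure lborel A * emeasure lborel B"
  unfolding lborel_prod[symmetric] using assms by (simp add: lborel.emeasure_pair_measure_Times)

lemma measure_lborel_Times:
  fixes A B :: "real set"
  assumes "A \<in> sets borel" "B \<in> sets borel"
  shows "measure lborel (A \<times> B) = measure lborel A * measure lborel B"
  using emeasure_lborel_Times[OF assms] by (simp add: measure_def enn2real_mult)

definition cell_lo :: "real \<Rightarrow> nat \<Rightarrow> nat \<Rightarrow> nat \<Rightarrow> real" where
  "cell_lo M N k a = - M * sqrt k / 2 + real a * (sqrt k / N)"

definition open_cell :: "real \<Rightarrow> nat \<Rightarrow> nat \<Rightarrow> nat \<times> nat \<Rightarrow> (real \<times> real) set" where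
  "open_cell M N k p =
     {cell_lo M N k (fst p) <..< cell_lo M N k (Suc (fst p))} \<times> {cell_lo M N k (snd p) <..< cell_lo M N k (Suc (snd p))}"

definition grid_boundary :: "real \<Rightarrow> nat \<Rightarrow> nat \<Rightarrow> (real \<times> real) set" where
  "grid_boundary M N k = big_square M k - (\<Union>p\<in>grid M N. open_cell M N k p)"

lemma small_square_eq:
  "small_square M N k p =
     {cell_lo M N k (fst p) .. cell_lo M N k (Suc (fst p))} \<times> {cell_lo M N k (snd p) .. cell_lo M N k (Suc (snd p))}"
  by (simp add: small_square_def cell_lo_def Let_def add.commute)

lemma cell_lo_diff: "cell_lo M N k b - cell_lo M N k a = (real b - real a) * (sqrt k / N)"
  unfolding cell_lo_def by (simp only: left_diff_distrib)

lemma cell_lo_mono: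
  assumes "a \<le> b" shows "cell_lo M N k a \<le> cell_lo M N k b"
proof -
  have "0 \<le> (real b - real a) * (sqrt k / N)"
    using assms by simp
  thus ?thesis
    using cell_lo_diff[of M N k b a] by linarith
qed

lemma big_square_eq:
  assumes "0 < N" "real (side_count M N) = M * real N"
  shows "big_square M k =
     {cell_lo M N k 0 .. cell_lo M N k (side_count M N)} \<times> {cell_lo M N k 0 .. cell_lo M N k (side_count M N)}"
  using assms by (simp add: big_square_def cell_lo_def)

lemma open_cell_subset: "open_cell M N k p \<subseteq> small_square M N k p"
  unfolding open_cell_def small_square_eq by auto

lemma open_cell_Int_small_square:
  assumes "p \<noteq> q" shows "open_cell M N k p \<inter> small_square M N k q = {}"
proof -
  have "{cell_lo M N k a <..< cell_lo M N k (Suc a)} \<inter> {cell_lo M N k b .. cell_lo M N k (Suc b)} = {}"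
    if "a \<noteq> b" for a b
  proof (cases "a < b")
    case True
    thus ?thesis using cell_lo_mono[of "Suc a" b M N k] by auto
  next
    case False
    thus ?thesis using that cell_lo_mono[of "Suc b" a M N k] by auto
  qed
  moreover have "fst p \<noteq> fst q \<or> snd p \<noteq> snd q"
    using assms by (auto simp: prod_eq_iff)
  ultimately show ?thesis
    unfolding open_cell_def small_square_eq by blast
qed

lemma disjoint_family_open_cell: "disjoint_family_on (open_cell M N k) G"
  unfolding disjoint_family_on_def using open_cell_Int_small_square open_cell_subset by blast

lemma sets_open_cell [simp]: "open_cell M N k p \<in> sets borel"
  unfolding open_cell_def by (simp add: borel_open open_Times)

lemma sets_small_square [simp]: "small_square M N k p \<in> sets borel"
  unfolding small_square_eq by (simp add: borel_closed closed_Times)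

lemma measure_open_cell: "measure lborel (open_cell M N k p) = real k / real N ^ 2"
  unfolding open_cell_def
  by (simp add: measure_lborel_Times cell_lo_mono cell_lo_diff power2_eq_square)

lemma emeasure_open_cell_finite: "emeasure lborel (open_cell M N k p) \<noteq> \<infinity>"
  unfolding open_cell_def by (simp add: emeasure_lborel_Times cell_lo_mono ennreal_mult_eq_top_iff)

lemma finite_grid: "finite (grid M N)"
  by (simp add: grid_def)

lemma small_square_subset_big_square:
  assumes "0 < N" "real (side_count M N) = M * real N" "p \<in> grid M N"
  shows "small_square M N k p \<subseteq> big_square M k"
proof -
  let ?lo = "cell_lo M N k" and ?n = "side_count M N"
  obtain a b where p: "p = (a, b)" "a < ?n" "b < ?n"
    using assms(3) by (auto simp: grid_def)
  hence "?lo 0 \<le> ?lo a" "?lo (Suc a) \<le> ?lo ?n" "?lo 0 \<le> ?lo b" "?lo (Suc b) \<le> ?lo ?n"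
    by (simp_all add: cell_lo_mono)
  thus ?thesis
    unfolding small_square_eq big_square_eq[OF assms(1,2)] p by auto
qed

lemma measure_grid_boundary:
  assumes "0 < N" "real (side_count M N) = M * real N"
  shows "measure lborel (grid_boundary M N k) = 0"
proof -
  let ?n = "side_count M N"
  have sub: "(\<Union>p\<in>grid M N. open_cell M N k p) \<subseteq> big_square M k"
    using small_square_subset_big_square[OF assms] open_cell_subset by blast
  have "measure lborel (\<Union>p\<in>grid M N. open_cell M N k p) = (\<Sum>p\<in>grid M N. measure lborel (open_cell M N k p))"
    using disjoint_family_open_cell emeasure_open_cell_finite
    by (intro measure_finite_Union) (auto simp: grid_def)
  also have "\<dots> = real ?n ^ 2 * (real k / real N ^ 2)"
    by (simp add: measure_open_cell grid_def power2_eq_square)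
  also have "\<dots> = measure lborel (big_square M k)"
    unfolding big_square_eq[OF assms]
    by (simp add: measure_lborel_Times cell_lo_mono cell_lo_diff power2_eq_square field_simps)
  finally show ?thesis
    unfolding grid_boundary_def big_square_eq[OF assms] using sub[unfolded big_square_eq[OF assms]]
    by (subst measure_Diff) (auto simp: emeasure_lborel_Times ennreal_mult_eq_top_iff cell_lo_mono
        borel_closed closed_Times)
qed

lemma AE_small_square_eq_open_cell:
  assumes pp: "poisson_process_on P Xs (big_square M k)"
    and N: "0 < N" "real (side_count M N) = M * real N"
  shows "AE \<omega> in P. \<forall>p\<in>grid M N. Xs \<omega> \<inter> small_square M N k p = Xs \<omega> \<inter> open_cell M N k p"
proof -
  have inside: "\<forall>\<omega>\<in>space P. Xs \<omega> \<subseteq> big_square M k"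
    using pp unfolding poisson_process_on_def by blast
  have "grid_boundary M N k \<in> sets borel"
    unfolding grid_boundary_def big_square_def open_cell_def
    by (intro borel_closed closed_Diff closed_Times closed_atLeastAtMost open_UN ballI open_Times) auto
  hence "AE \<omega> in P. Xs \<omega> \<inter> grid_boundary M N k = {}"
    using measure_grid_boundary[OF N] by (intro poisson_process_AE_disjoint[OF pp]) (auto simp: grid_boundary_def)
  thus ?thesis
  proof (rule AE_mp, intro AE_I2 impI ballI)
    fix \<omega> p assume \<omega>: "\<omega> \<in> space P" "Xs \<omega> \<inter> grid_boundary M N k = {}" and "p \<in> grid M N"
    have "x \<in> open_cell M N k p" if x: "x \<in> Xs \<omega>" "x \<in> small_square M N k p" for x
    proof -
      obtain q where "q \<in> grid M N" "x \<in> open_cell M N k q"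
        using \<omega> inside x unfolding grid_boundary_def by blast
      with x(2) open_cell_Int_small_square[of q p M N k] show ?thesis
        by blast
    qed
    thus "Xs \<omega> \<inter> small_square M N k p = Xs \<omega> \<inter> open_cell M N k p"
      using open_cell_subset by blast
  qed
qed

lemma prob_belongs:
  assumes pp: "poisson_process_on P Xs (big_square M k)"
    and N: "0 < N" "real (side_count M N) = M * real N"
    and finite_labels: "\<forall>p\<in>grid M N. F p \<noteq> \<infinity>"
  shows "measure P {\<omega> \<in> space P. belongs M N k (Xs \<omega>) F} = (\<Prod>p\<in>grid M N. label_prob N k (F p))"
proof -
  interpret prob_space P
    using pp unfolding poisson_process_on_def by (elim conjE)
  let ?G = "grid M N" and ?C = "small_square M N k" and ?O = "open_cell M N k"
  have "AE \<omega> in P. (\<forall>p\<in>?G. card (Xs \<omega> \<inter> ?C p) \<in> label_counts N k (F p))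
                   \<longleftrightarrow> (\<forall>p\<in>?G. card (Xs \<omega> \<inter> ?O p) \<in> label_counts N k (F p))"
    using AE_small_square_eq_open_cell[OF pp N] by (rule eventually_mono) simp
  moreover have "{\<omega> \<in> space P. \<forall>p\<in>?G. card (Xs \<omega> \<inter> A p) \<in> label_counts N k (F p)} \<in> events"
    if "\<And>p. p \<in> ?G \<Longrightarrow> A p \<in> sets borel \<and> A p \<subseteq> ?C p" for A
    using that small_square_subset_big_square[OF N] finite_label_counts finite_labels
    by (intro sets.sets_Collect_finite_All poisson_process_count_event[OF pp])
       (auto simp: finite_grid, blast)
  ultimately have "prob {\<omega> \<in> space P. \<forall>p\<in>?G. card (Xs \<omega> \<inter> ?C p) \<in> label_counts N k (F p)}
       = prob {\<omega> \<in> space P. \<forall>p\<in>?G. card (Xs \<omega> \<inter> ?O p) \<in> label_counts N k (F p)}"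
    using open_cell_subset by (intro prob_eq_AE) auto
  also have "\<dots> = (\<Prod>p\<in>?G. label_prob N k (F p))"
    using small_square_subset_big_square[OF N] open_cell_subset[of M N k] finite_labels
    by (subst poisson_process_counts_in[OF pp])
       (fastforce simp: finite_grid disjoint_family_open_cell finite_label_counts label_prob_def measure_open_cell)+
  finally show ?thesis
    by (simp add: belongs_def label_counts_def)
qed

theorem lemma10:
  fixes \<epsilon> M :: real
  assumes "0 < \<epsilon>" and "\<epsilon> < 1/2" and "M \<ge> 40"
  shows "\<exists>N0::nat. \<forall>N::nat. N \<ge> N0 \<and> 21 dvd N \<and> M * real N \<in> \<nat> \<longrightarrow>
           (\<forall>F. good \<epsilon> M N F \<longrightarrow>
              (\<exists>(\<theta>::real) (e::nat \<Rightarrow> real). e \<longlonglongrightarrow> 0 \<and>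
                 (\<forall>\<^sub>F k in sequentially.
                    \<forall>(P::'a measure) Xs. poisson_process_on P Xs (big_square M k) \<longrightarrow>
                       measure P {\<omega> \<in> space P. belongs M N k (Xs \<omega>) F}
                         = exp (- (\<theta> + e k) * real k))))"
proof (rule exI[of _ 1], intro allI impI)
  fix N :: nat and F
  assume N: "1 \<le> N \<and> 21 dvd N \<and> M * real N \<in> \<nat>" and "good \<epsilon> M N F"
  hence valid: "\<forall>p\<in>grid M N. valid_label N (F p)" and finite_labels: "\<forall>p\<in>grid M N. F p \<noteq> \<infinity>"
    by (force simp: good_def config_def type_A_def)+
  have "0 < N" and side: "real (side_count M N) = M * real N"
    using N by (auto simp: side_count_def elim: Nats_cases)
  have "\<forall>p\<in>grid M N. \<exists>\<theta>. decays_at_rate (\<lambda>k. label_prob N k (F p)) \<theta>"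
    using label_prob_decays[OF \<open>0 < N\<close>] valid finite_labels by blast
  from bchoice[OF this] obtain \<theta> where "\<forall>p\<in>grid M N. decays_at_rate (\<lambda>k. label_prob N k (F p)) (\<theta> p)" ..
  hence "decays_at_rate (\<lambda>k. \<Prod>p\<in>grid M N. label_prob N k (F p)) (\<Sum>p\<in>grid M N. \<theta> p)"
    by (intro decays_at_rate_prod finite_grid) auto
  then obtain e where "e \<longlonglongrightarrow> 0" and e: "\<forall>\<^sub>F k in sequentially.
      (\<Prod>p\<in>grid M N. label_prob N k (F p)) = exp (- ((\<Sum>p\<in>grid M N. \<theta> p) + e k) * real k)"
    using decays_at_rate_imp_exp by blast
  have "\<forall>\<^sub>F k in sequentially. \<forall>(P::'a measure) Xs. poisson_process_on P Xs (big_square M k) \<longrightarrow>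
      measure P {\<omega> \<in> space P. belongs M N k (Xs \<omega>) F} = exp (- ((\<Sum>p\<in>grid M N. \<theta> p) + e k) * real k)"
    using e by eventually_elim (auto simp: prob_belongs[OF _ \<open>0 < N\<close> side finite_labels])
  with \<open>e \<longlonglongrightarrow> 0\<close> show "\<exists>\<theta> (e::nat \<Rightarrow> real). e \<longlonglongrightarrow> 0 \<and>
      (\<forall>\<^sub>F k in sequentially. \<forall>(P::'a measure) Xs. poisson_process_on P Xs (big_square M k) \<longrightarrow>
         measure P {\<omega> \<in> space P. belongs M N k (Xs \<omega>) F} = exp (- (\<theta> + e k) * real k))"
    by blast
qed

end
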